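(* Let $K\subset\mathbb{R}^d$ be compact, let $f:K\to\mathbb{R}$ be continuous and let $\varepsilon>0$. Then there exists a two-layer Morph-Net $N:\mathbb{R}^d\to\mathbb{R}$ (which may be taken to use dilation neurons only) such that $\sup_{{\bm{x}}\in K}|f({\bm{x}})-N({\bm{x}})|<\varepsilon$.
   Context: For ${\bm{x}}\in\mathbb{R}^p$ write ${\bm{x}}'=(x_1,\dots,x_p,0)\in\mathbb{R}^{p+1}$ (augmented input). For a structuring element ${\bm{s}}\in\mathbb{R}^{p+1}$, the dilation neuron computes ${\bm{x}}\oplus{\bm{s}}=\max_{1\le k\le p+1}(x'_k+s_k)$ and the erosion neuron computes ${\bm{x}}\ominus{\bm{s}}=\min_{1\le k\le p+1}(x'_k-s_k)$. A dilation-erosion layer applied to ${\bm{y}}\in\mathbb{R}^p$ consists of finitely many dilation and erosion neurons (each with its own structuring element in $\mathbb{R}^{p+1}$) all applied to ${\bm{y}}$, and outputs the vector of their values. A linear combination layer is an affine map ${\bm{z}}\mapsto A{\bm{z}}+{\bm{c}}$. A two-layer Morph-Net $N:\mathbb{R}^d\to\mathbb{R}$ is the composition: dilation-erosion layer on ${\bm{x}}\in\mathbb{R}^d$, then a linear combination layer, then a second dilation-erosion layer applied to the resulting vector, then a linear combination layer with a single real output. *)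

theory Defs
  imports "HOL-Analysis.Analysis" "HOL-Library.Extended_Real"
begin

text \<open>Vectors in R^p are functions on an index set I (I = UNIV for the input space
  real^'d, I = {..<p} for hidden layers, vectors as nat => real).  A structuring element
  in R^(p+1) is a pair (s, b): s gives the first p coordinates, b the last one, which is
  paired with the appended coordinate x'_(p+1) = 0 of the augmented input.\<close>

definition dilation :: "'i set \<Rightarrow> ('i \<Rightarrow> real) \<Rightarrow> ('i \<Rightarrow> real) \<times> real \<Rightarrow> real" where
  "dilation I x sb = Max (insert (0 + snd sb) ((\<lambda>k. x k + fst sb k) ` I))"

definition erosion :: "'i set \<Rightarrow> ('i \<Rightarrow> real) \<Rightarrow> ('i \<Rightarrow> real) \<times> real \<Rightarrow> real" where
  "erosion I x sb = Min (insert (0 - snd sb) ((\<lambda>k. x k - fst sb k) ` I))"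

definition de_neuron :: "'i set \<Rightarrow> ('i \<Rightarrow> real) \<Rightarrow> bool \<Rightarrow> ('i \<Rightarrow> real) \<times> real \<Rightarrow> real" where
  "de_neuron I x isdil sb = (if isdil then dilation I x sb else erosion I x sb)"

definition morphnet2 ::
  "nat \<Rightarrow> (nat \<Rightarrow> bool) \<Rightarrow> (nat \<Rightarrow> ('d \<Rightarrow> real) \<times> real)
   \<Rightarrow> nat \<Rightarrow> (nat \<Rightarrow> nat \<Rightarrow> real) \<Rightarrow> (nat \<Rightarrow> real)
   \<Rightarrow> nat \<Rightarrow> (nat \<Rightarrow> bool) \<Rightarrow> (nat \<Rightarrow> (nat \<Rightarrow> real) \<times> real)
   \<Rightarrow> (nat \<Rightarrow> real) \<Rightarrow> real \<Rightarrow> real ^ 'd \<Rightarrow> real" where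
  "morphnet2 m1 k1 S1 q A1 c1 m2 k2 S2 a2 c2 x =
     (let h1 = (\<lambda>j. de_neuron UNIV (\<lambda>i. x $ i) (k1 j) (S1 j));
          z  = (\<lambda>i. (\<Sum>j<m1. A1 i j * h1 j) + c1 i);
          h2 = (\<lambda>j. de_neuron {..<q} z (k2 j) (S2 j))
      in (\<Sum>j<m2. a2 j * h2 j) + c2)"

definition is_morphnet2 :: "(real ^ 'd \<Rightarrow> real) \<Rightarrow> bool" where
  "is_morphnet2 N \<longleftrightarrow> (\<exists>m1 k1 S1 q A1 c1 m2 k2 S2 a2 c2.
      N = morphnet2 m1 k1 S1 q A1 c1 m2 k2 S2 a2 c2)"

definition is_dilation_morphnet2 :: "(real ^ 'd \<Rightarrow> real) \<Rightarrow> bool" where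
  "is_dilation_morphnet2 N \<longleftrightarrow> (\<exists>m1 S1 q A1 c1 m2 S2 a2 c2.
      N = morphnet2 m1 (\<lambda>_. True) S1 q A1 c1 m2 (\<lambda>_. True) S2 a2 c2)"

end

theory Submission imports Defs begin

text \<open>Differences of maxima of finitely many affine functions are continuous, interpolate
  any two values at two points, and are closed under pointwise \<open>max\<close> and \<open>min\<close>, since
  \<open>max (a - b) (c - d) = max (a + d) (c + b) - (b + d)\<close> and a sum of two maxima of affine
  functions is again one. By the lattice form of the Stone--Weierstrass theorem they are
  therefore uniformly dense among the continuous functions on a compact set.
  On a bounded set each such difference is computed by a two-layer Morph-Net with dilations
  only: first-layer dilations whose structuring elements single out one coordinate return
  the coordinates of the input, so the linear layer can output every affine piece; two
  second-layer dilations take the maximum over the two groups of pieces, and the output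
  layer subtracts them.\<close>

section \<open>A lattice version of the Stone--Weierstrass theorem\<close>

lemma compact_finite_positive_cover:
  fixes \<phi> :: "'a::topological_space \<Rightarrow> 'a \<Rightarrow> real"
  assumes "compact K" "K \<noteq> {}"
    and cont: "\<And>y. y \<in> K \<Longrightarrow> continuous_on K (\<phi> y)"
    and pos: "\<And>y. y \<in> K \<Longrightarrow> \<phi> y y > 0"
  shows "\<exists>T. finite T \<and> T \<noteq> {} \<and> T \<subseteq> K \<and> (\<forall>z\<in>K. \<exists>y\<in>T. \<phi> y z > 0)"
proof -
  have "\<exists>U. open U \<and> U \<inter> K = \<phi> y -` {0<..} \<inter> K" if "y \<in> K" for y
    using cont[OF that] open_greaterThan unfolding continuous_on_open_invariant by blast
  then obtain U where U_open: "\<And>y. y \<in> K \<Longrightarrow> open (U y)"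
    and U: "\<And>y. y \<in> K \<Longrightarrow> U y \<inter> K = \<phi> y -` {0<..} \<inter> K"
    by metis
  have "y \<in> U y" if "y \<in> K" for y
    using U[OF that] pos[OF that] that by blast
  then have "K \<subseteq> (\<Union>y\<in>K. U y)"
    by blast
  then obtain T where T: "T \<subseteq> K" "finite T" "K \<subseteq> (\<Union>y\<in>T. U y)"
    using compactE_image[OF \<open>compact K\<close>, of K U] U_open by blast
  have "\<exists>y\<in>T. \<phi> y z > 0" if z: "z \<in> K" for z
  proof -
    obtain y where "y \<in> T" "z \<in> U y"
      using T(3) z by blast
    then have "z \<in> U y \<inter> K"
      using z by blast
    then show ?thesis
      using U \<open>y \<in> T\<close> T(1) by blast
  qed
  moreover have "T \<noteq> {}"
    using T(3) \<open>K \<noteq> {}\<close> by blast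
  ultimately show ?thesis
    using T by blast
qed

lemma finite_Min_closed:
  assumes "finite T" "T \<noteq> {}" "\<And>y. y \<in> T \<Longrightarrow> g y \<in> L"
    and min_closed: "\<And>u v. u \<in> L \<Longrightarrow> v \<in> L \<Longrightarrow> (\<lambda>x. min (u x) (v x)) \<in> L"
  shows "(\<lambda>x. Min ((\<lambda>y. g y x) ` T)) \<in> L"
  using assms(1-3)
proof (induction T rule: finite_ne_induct)
  case (insert a T)
  have "(\<lambda>x. Min ((\<lambda>y. g y x) ` insert a T)) = (\<lambda>x. min (g a x) (Min ((\<lambda>y. g y x) ` T)))"
    using insert.hyps by simp
  then show ?case
    using insert min_closed by simp
qed simp

lemma finite_Max_closed:
  assumes "finite T" "T \<noteq> {}" "\<And>y. y \<in> T \<Longrightarrow> g y \<in> L"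
    and max_closed: "\<And>u v. u \<in> L \<Longrightarrow> v \<in> L \<Longrightarrow> (\<lambda>x. max (u x) (v x)) \<in> L"
  shows "(\<lambda>x. Max ((\<lambda>y. g y x) ` T)) \<in> L"
  using assms(1-3)
proof (induction T rule: finite_ne_induct)
  case (insert a T)
  have "(\<lambda>x. Max ((\<lambda>y. g y x) ` insert a T)) = (\<lambda>x. max (g a x) (Max ((\<lambda>y. g y x) ` T)))"
    using insert.hyps by simp
  then show ?case
    using insert max_closed by simp
qed simp

lemma lattice_approx_from_above_at:
  fixes f :: "'a::topological_space \<Rightarrow> real"
  assumes "compact K" "K \<noteq> {}" and f: "continuous_on K f" and "e > 0"
    and cont: "\<And>g. g \<in> L \<Longrightarrow> continuous_on K g"
    and min_closed: "\<And>u v. u \<in> L \<Longrightarrow> v \<in> L \<Longrightarrow> (\<lambda>x. min (u x) (v x)) \<in> L"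
    and interp: "\<And>x y. x \<in> K \<Longrightarrow> y \<in> K \<Longrightarrow> \<exists>g\<in>L. g x = f x \<and> g y = f y"
    and "x \<in> K"
  shows "\<exists>h\<in>L. h x = f x \<and> (\<forall>z\<in>K. h z < f z + e)"
proof -
  obtain G where G: "\<And>y. y \<in> K \<Longrightarrow> G y \<in> L \<and> G y x = f x \<and> G y y = f y"
    using interp[OF \<open>x \<in> K\<close>] by metis
  have "continuous_on K (\<lambda>z. f z + e - G y z)" if "y \<in> K" for y
    using that f cont G by (intro continuous_intros) auto
  moreover have "f y + e - G y y > 0" if "y \<in> K" for y
    using that G \<open>e > 0\<close> by simp
  ultimately obtain T where T: "finite T" "T \<noteq> {}" "T \<subseteq> K"
    and cover: "\<forall>z\<in>K. \<exists>y\<in>T. f z + e - G y z > 0"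
    using compact_finite_positive_cover[of K "\<lambda>y z. f z + e - G y z"] assms(1,2) by blast
  define h where "h z = Min ((\<lambda>y. G y z) ` T)" for z
  have "h \<in> L"
    unfolding h_def using T G by (intro finite_Min_closed[OF T(1,2) _ min_closed]) auto
  moreover have "h x = f x"
  proof -
    have "(\<lambda>y. G y x) ` T = (\<lambda>_. f x) ` T"
      using T G by (intro image_cong) auto
    then show ?thesis
      using T(2) by (simp add: h_def image_constant_conv)
  qed
  moreover have "h z < f z + e" if z: "z \<in> K" for z
  proof -
    obtain y where "y \<in> T" "G y z < f z + e"
      using cover z by force
    moreover have "h z \<le> G y z"
      unfolding h_def using T \<open>y \<in> T\<close> by simp
    ultimately show ?thesis
      by linarith
  qed
  ultimately show ?thesis
    by blast
qed

lemma lattice_Stone_Weierstrass: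
  fixes f :: "'a::topological_space \<Rightarrow> real"
  assumes "compact K" "K \<noteq> {}" and f: "continuous_on K f" and "e > 0"
    and cont: "\<And>g. g \<in> L \<Longrightarrow> continuous_on K g"
    and max_closed: "\<And>u v. u \<in> L \<Longrightarrow> v \<in> L \<Longrightarrow> (\<lambda>x. max (u x) (v x)) \<in> L"
    and min_closed: "\<And>u v. u \<in> L \<Longrightarrow> v \<in> L \<Longrightarrow> (\<lambda>x. min (u x) (v x)) \<in> L"
    and interp: "\<And>x y. x \<in> K \<Longrightarrow> y \<in> K \<Longrightarrow> \<exists>g\<in>L. g x = f x \<and> g y = f y"
  shows "\<exists>h\<in>L. \<forall>z\<in>K. \<bar>f z - h z\<bar> < e"
proof -
  have "\<forall>x\<in>K. \<exists>h. h \<in> L \<and> h x = f x \<and> (\<forall>z\<in>K. h z < f z + e)"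
    using lattice_approx_from_above_at[OF assms(1-4) cont min_closed interp] by blast
  then obtain H where H: "\<And>x. x \<in> K \<Longrightarrow> H x \<in> L \<and> H x x = f x \<and> (\<forall>z\<in>K. H x z < f z + e)"
    by (metis bchoice)
  have "continuous_on K (\<lambda>z. H y z - (f z - e))" if "y \<in> K" for y
    using that f cont H by (intro continuous_intros) auto
  moreover have "H y y - (f y - e) > 0" if "y \<in> K" for y
    using that H \<open>e > 0\<close> by simp
  ultimately obtain T where T: "finite T" "T \<noteq> {}" "T \<subseteq> K"
    and cover: "\<forall>z\<in>K. \<exists>y\<in>T. H y z - (f z - e) > 0"
    using compact_finite_positive_cover[of K "\<lambda>y z. H y z - (f z - e)"] assms(1,2) by blast
  define h where "h z = Max ((\<lambda>y. H y z) ` T)" for z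
  have "h \<in> L"
    unfolding h_def using T H by (intro finite_Max_closed[OF T(1,2) _ max_closed]) auto
  moreover have "\<bar>f z - h z\<bar> < e" if z: "z \<in> K" for z
  proof -
    have "h z \<in> (\<lambda>y. H y z) ` T"
      unfolding h_def using T by (intro Max_in) auto
    then have "h z < f z + e"
      using H T z by auto
    moreover obtain y where "y \<in> T" "f z - e < H y z"
      using cover z by force
    moreover have "H y z \<le> h z"
      unfolding h_def using T \<open>y \<in> T\<close> by simp
    ultimately show ?thesis
      by linarith
  qed
  ultimately show ?thesis
    by blast
qed

section \<open>Differences of maxima of affine functions\<close>

definition max_affine :: "('a::real_inner \<times> real) set \<Rightarrow> 'a \<Rightarrow> real" where
  "max_affine F x = Max ((\<lambda>(w, c). w \<bullet> x + c) ` F)"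

definition max_affine_differences :: "('a::real_inner \<Rightarrow> real) set" where
  "max_affine_differences = {(\<lambda>x. max_affine F x - max_affine G x) | F G.
     finite F \<and> F \<noteq> {} \<and> finite G \<and> G \<noteq> {}}"

lemma set_plus_eq_empty_iff: "A + B = {} \<longleftrightarrow> A = {} \<or> B = {}"
  by (auto simp: set_plus_def)

lemma Max_set_plus:
  fixes A B :: "'a::{linorder, ordered_ab_semigroup_add} set"
  assumes "finite A" "A \<noteq> {}" "finite B" "B \<noteq> {}"
  shows "Max (A + B) = Max A + Max B"
proof (rule Max_eqI)
  show "finite (A + B)"
    using assms by (simp add: finite_set_plus)
  show "c \<le> Max A + Max B" if "c \<in> A + B" for c
    using that assms by (auto elim!: set_plus_elim intro: add_mono)
  show "Max A + Max B \<in> A + B"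
    using assms by (intro set_plus_intro Max_in)
qed

lemma max_affine_set_plus:
  assumes "finite F" "F \<noteq> {}" "finite G" "G \<noteq> {}"
  shows "max_affine (F + G) x = max_affine F x + max_affine G x"
proof -
  let ?a = "\<lambda>(w, c). w \<bullet> x + c"
  have "?a ` (F + G) = ?a ` F + ?a ` G"
    by (force simp: set_plus_def inner_add_left)
  then show ?thesis
    unfolding max_affine_def using assms by (simp add: Max_set_plus)
qed

lemma max_affine_Un:
  assumes "finite F" "F \<noteq> {}" "finite G" "G \<noteq> {}"
  shows "max_affine (F \<union> G) x = max (max_affine F x) (max_affine G x)"
  unfolding max_affine_def using assms by (simp add: image_Un Max_Un)

lemma continuous_on_max_affine:
  assumes "finite F" "F \<noteq> {}"
  shows "continuous_on S (max_affine F)"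
  using assms
proof (induction F rule: finite_ne_induct)
  case (singleton a)
  then show ?case
    unfolding max_affine_def by (auto simp: case_prod_beta intro!: continuous_intros)
next
  case (insert a F)
  have "max_affine (insert a F) = (\<lambda>x. max (fst a \<bullet> x + snd a) (max_affine F x))"
    using insert by (simp add: max_affine_def case_prod_beta fun_eq_iff)
  then show ?case
    using insert by (auto intro!: continuous_intros)
qed

lemma max_affine_differences_elim:
  assumes "g \<in> max_affine_differences"
  obtains F G where "finite F" "F \<noteq> {}" "finite G" "G \<noteq> {}"
    and "g = (\<lambda>x. max_affine F x - max_affine G x)"
  using assms unfolding max_affine_differences_def by blast

lemma max_affine_differencesI:
  "finite F \<Longrightarrow> F \<noteq> {} \<Longrightarrow> finite G \<Longrightarrow> G \<noteq> {} \<Longrightarrow>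
    (\<lambda>x. max_affine F x - max_affine G x) \<in> max_affine_differences"
  unfolding max_affine_differences_def by blast

lemma continuous_on_max_affine_differences:
  "g \<in> max_affine_differences \<Longrightarrow> continuous_on S g"
  by (elim max_affine_differences_elim) (auto intro!: continuous_intros continuous_on_max_affine)

lemma max_affine_differences_max:
  assumes "u \<in> max_affine_differences" "v \<in> max_affine_differences"
  shows "(\<lambda>x. max (u x) (v x)) \<in> max_affine_differences"
proof -
  obtain F1 G1 F2 G2 where fin: "finite F1" "F1 \<noteq> {}" "finite G1" "G1 \<noteq> {}"
      "finite F2" "F2 \<noteq> {}" "finite G2" "G2 \<noteq> {}"
    and u: "u = (\<lambda>x. max_affine F1 x - max_affine G1 x)"
    and v: "v = (\<lambda>x. max_affine F2 x - max_affine G2 x)"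
    using assms by (elim max_affine_differences_elim) metis
  have "max_affine (F1 + G2 \<union> (F2 + G1)) x - max_affine (G1 + G2) x
      = max (max_affine F1 x + max_affine G2 x) (max_affine F2 x + max_affine G1 x)
        - (max_affine G1 x + max_affine G2 x)" for x
    using fin by (simp add: max_affine_Un max_affine_set_plus finite_set_plus set_plus_eq_empty_iff)
  also have "\<dots> x = max (u x) (v x)" for x
    by (simp add: u v max_def)
  finally show ?thesis
    using max_affine_differencesI[of "F1 + G2 \<union> (F2 + G1)" "G1 + G2"] fin
    by (simp add: finite_set_plus set_plus_eq_empty_iff)
qed

lemma max_affine_differences_min:
  assumes "u \<in> max_affine_differences" "v \<in> max_affine_differences"
  shows "(\<lambda>x. min (u x) (v x)) \<in> max_affine_differences"
proof -
  obtain F1 G1 F2 G2 where fin: "finite F1" "F1 \<noteq> {}" "finite G1" "G1 \<noteq> {}"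
      "finite F2" "F2 \<noteq> {}" "finite G2" "G2 \<noteq> {}"
    and u: "u = (\<lambda>x. max_affine F1 x - max_affine G1 x)"
    and v: "v = (\<lambda>x. max_affine F2 x - max_affine G2 x)"
    using assms by (elim max_affine_differences_elim) metis
  have "max_affine (F1 + F2) x - max_affine (G1 + F2 \<union> (G2 + F1)) x
      = (max_affine F1 x + max_affine F2 x)
        - max (max_affine G1 x + max_affine F2 x) (max_affine G2 x + max_affine F1 x)" for x
    using fin by (simp add: max_affine_Un max_affine_set_plus finite_set_plus set_plus_eq_empty_iff)
  also have "\<dots> x = min (u x) (v x)" for x
    by (simp add: u v max_def min_def)
  finally show ?thesis
    using max_affine_differencesI[of "F1 + F2" "G1 + F2 \<union> (G2 + F1)"] fin
    by (simp add: finite_set_plus set_plus_eq_empty_iff)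
qed

lemma affine_in_max_affine_differences:
  "(\<lambda>x. w \<bullet> x + c) \<in> max_affine_differences"
  using max_affine_differencesI[of "{(w, c)}" "{(0, 0)}"] by (simp add: max_affine_def)

lemma max_affine_differences_interpolate:
  fixes x y :: "'a::real_inner"
  assumes "x = y \<Longrightarrow> a = b"
  shows "\<exists>g\<in>max_affine_differences. g x = a \<and> g y = b"
proof (cases "x = y")
  case True
  then show ?thesis
    using assms affine_in_max_affine_differences[of 0 a] by auto
next
  case False
  define w where "w = ((b - a) / ((y - x) \<bullet> (y - x))) *\<^sub>R (y - x)"
  have "w \<bullet> (y - x) = b - a"
    using False by (simp add: w_def)
  define g where "g z = w \<bullet> z + (a - w \<bullet> x)" for z
  have "g x = a" "g y = b"
    using \<open>w \<bullet> (y - x) = b - a\<close> by (simp_all add: g_def inner_diff_right)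
  moreover have "g \<in> max_affine_differences"
    unfolding g_def by (rule affine_in_max_affine_differences)
  ultimately show ?thesis
    by blast
qed

section \<open>Realising differences of max-affine functions by Morph-Nets\<close>

text \<open>With all inputs in \<open>[-C, C]\<close>, the coordinates outside \<open>J\<close> and the bias
  coordinate are pushed below \<open>-C\<close>, so the dilation returns the maximum over \<open>J\<close>.\<close>
definition select_element :: "'i set \<Rightarrow> real \<Rightarrow> ('i \<Rightarrow> real) \<times> real" where
  "select_element J C = ((\<lambda>i. if i \<in> J then 0 else -(2 * C + 1)), -(C + 1))"

lemma dilation_select_element:
  fixes z :: "'i \<Rightarrow> real"
  assumes "finite I" "J \<subseteq> I" "J \<noteq> {}" and bound: "\<And>i. i \<in> I \<Longrightarrow> \<bar>z i\<bar> \<le> C"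
  shows "dilation I z (select_element J C) = Max (z ` J)"
proof -
  define S where "S = insert (-(C + 1)) ((\<lambda>k. z k + (if k \<in> J then 0 else -(2 * C + 1))) ` I)"
  have "finite J"
    using assms finite_subset by blast
  then have Max_ge: "z j \<le> Max (z ` J)" if "j \<in> J" for j
    using that by simp
  then have "-C \<le> Max (z ` J)"
    using assms bound by (metis abs_le_D2 ex_in_conv minus_le_iff order.trans subsetD)
  then have "s \<le> Max (z ` J)" if "s \<in> S" for s
    using that Max_ge bound unfolding S_def by (force split: if_splits)
  moreover have "Max (z ` J) \<in> S"
  proof -
    have "Max (z ` J) \<in> z ` J"
      using \<open>finite J\<close> \<open>J \<noteq> {}\<close> by (intro Max_in) auto
    then obtain j where "j \<in> J" "Max (z ` J) = z j"
      by blast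
    then show ?thesis
      using \<open>J \<subseteq> I\<close> unfolding S_def by (auto intro!: image_eqI[of _ _ j])
  qed
  ultimately show ?thesis
    unfolding dilation_def select_element_def using \<open>finite I\<close>
    by (intro Max_eqI) (auto simp: S_def)
qed

lemma dilation_select_coordinate:
  fixes x :: "real ^ 'd"
  assumes "norm x \<le> B"
  shows "dilation UNIV (\<lambda>k. x $ k) (select_element {j} B) = x $ j"
proof -
  have "\<bar>x $ k\<bar> \<le> B" for k
    using component_le_norm_cart[of x k] assms by linarith
  then show ?thesis
    using dilation_select_element[of UNIV "{j}" "\<lambda>k. x $ k" B] by simp
qed

lemma dilation_layer_linear:
  fixes W :: "nat \<Rightarrow> real ^ 'd"
  shows "\<exists>(m :: nat) S A. \<forall>x i. norm x \<le> B \<longrightarrow>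
    (\<Sum>j<m. A i j * de_neuron UNIV (\<lambda>k. x $ k) True (S j)) = W i \<bullet> x"
proof -
  obtain e :: "nat \<Rightarrow> 'd" where e: "bij_betw e {..<CARD('d)} UNIV"
    using ex_bij_betw_nat_finite[of "UNIV :: 'd set"] by (auto simp: atLeast0LessThan)
  have sum_eq: "\<forall>x i. norm x \<le> B \<longrightarrow>
    (\<Sum>j<CARD('d). W i $ e j * de_neuron UNIV (\<lambda>k. x $ k) True (select_element {e j} B)) = W i \<bullet> x"
  proof (intro allI impI)
    fix x :: "real ^ 'd" and i
    assume "norm x \<le> B"
    then have "(\<Sum>j<CARD('d). W i $ e j * de_neuron UNIV (\<lambda>k. x $ k) True (select_element {e j} B))
        = (\<Sum>j<CARD('d). (\<lambda>k. W i $ k * x $ k) (e j))"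
      by (simp add: de_neuron_def dilation_select_coordinate)
    also have "\<dots> = (\<Sum>k\<in>UNIV. W i $ k * x $ k)"
      by (rule sum.reindex_bij_betw[OF e])
    finally show "(\<Sum>j<CARD('d). W i $ e j * de_neuron UNIV (\<lambda>k. x $ k) True (select_element {e j} B))
        = W i \<bullet> x"
      by (simp add: inner_vec_def)
  qed
  show ?thesis
    by (rule exI[of _ "CARD('d)"], rule exI[of _ "\<lambda>j. select_element {e j} B"],
        rule exI[of _ "\<lambda>i j. W i $ e j"]) (use sum_eq in simp)
qed

lemma affine_family_bounded:
  fixes W :: "nat \<Rightarrow> 'a::real_inner"
  assumes "\<forall>x\<in>K. norm x \<le> R"
  shows "\<exists>C. \<forall>x\<in>K. \<forall>i<q. \<bar>W i \<bullet> x + c i\<bar> \<le> C"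
proof -
  define C where "C = (\<Sum>i<q. norm (W i) * max R 0 + \<bar>c i\<bar>)"
  have "\<bar>W i \<bullet> x + c i\<bar> \<le> C" if "x \<in> K" "i < q" for x i
  proof -
    have "\<bar>W i \<bullet> x + c i\<bar> \<le> norm (W i) * norm x + \<bar>c i\<bar>"
      using Cauchy_Schwarz_ineq2[of "W i" x] by linarith
    also have "\<dots> \<le> norm (W i) * max R 0 + \<bar>c i\<bar>"
      using assms that by (intro add_right_mono mult_left_mono) auto
    also have "\<dots> \<le> C"
      unfolding C_def using that by (intro member_le_sum) auto
    finally show ?thesis .
  qed
  then show ?thesis
    by blast
qed

lemma nth_append_image_prefix: "(!) (xs @ ys) ` {..<length xs} = set xs"
proof -
  have "(!) (xs @ ys) ` {..<length xs} = (!) xs ` {..<length xs}"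
    by (auto simp: nth_append)
  then show ?thesis
    by (simp add: atLeast0LessThan[symmetric] nth_image)
qed

lemma nth_append_image_suffix: "(!) (xs @ ys) ` {length xs..<length xs + length ys} = set ys"
proof -
  have "{length xs..<length xs + length ys} = (\<lambda>j. length xs + j) ` {..<length ys}"
    by (simp add: atLeast0LessThan[symmetric] add.commute)
  then have "(!) (xs @ ys) ` {length xs..<length xs + length ys} = (!) ys ` {..<length ys}"
    by (simp add: image_image)
  then show ?thesis
    by (simp add: atLeast0LessThan[symmetric] nth_image)
qed

lemma dilation_layer_max_difference:
  fixes z :: "nat \<Rightarrow> real"
  assumes "0 < p" "p < q" and bound: "\<And>i. i < q \<Longrightarrow> \<bar>z i\<bar> \<le> C"
  shows "(\<Sum>j<(2::nat). (if j = 0 then 1 else -1) * de_neuron {..<q} z True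
      (if j = 0 then select_element {..<p} C else select_element {p..<q} C))
    = Max (z ` {..<p}) - Max (z ` {p..<q})"
proof -
  have "dilation {..<q} z (select_element {..<p} C) = Max (z ` {..<p})"
    "dilation {..<q} z (select_element {p..<q} C) = Max (z ` {p..<q})"
    using assms by (auto intro!: dilation_select_element)
  then show ?thesis
    by (simp add: numeral_2_eq_2 de_neuron_def)
qed

lemma max_affine_difference_dilation_morphnet2:
  fixes F G :: "((real ^ 'd) \<times> real) set"
  assumes "finite F" "F \<noteq> {}" "finite G" "G \<noteq> {}" and bounded: "\<forall>x\<in>K. norm x \<le> R"
  shows "\<exists>N. is_dilation_morphnet2 N \<and> (\<forall>x\<in>K. N x = max_affine F x - max_affine G x)"
proof -
  obtain fs gs where fs: "set fs = F" and gs: "set gs = G"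
    using finite_list[OF \<open>finite F\<close>] finite_list[OF \<open>finite G\<close>] by blast
  define ps where "ps = fs @ gs"
  define p where "p = length fs"
  define q where "q = length ps"
  define aff where "aff x = (\<lambda>i. fst (ps ! i) \<bullet> x + snd (ps ! i))" for x
  obtain m1 :: nat and S1 A1 where layer1: "\<And>x i. norm x \<le> R \<Longrightarrow>
      (\<Sum>j<m1. A1 i j * de_neuron UNIV (\<lambda>k. x $ k) True (S1 j)) = fst (ps ! i) \<bullet> x"
    using dilation_layer_linear[where B = R and W = "\<lambda>i. fst (ps ! i)"] by blast
  obtain C where C: "\<forall>x\<in>K. \<forall>i<q. \<bar>aff x i\<bar> \<le> C"
    unfolding aff_def
    using affine_family_bounded[OF bounded, where W = "\<lambda>i. fst (ps ! i)" and c = "\<lambda>i. snd (ps ! i)"]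
    by blast
  define N where "N = morphnet2 m1 (\<lambda>_. True) S1 q A1 (\<lambda>i. snd (ps ! i)) 2 (\<lambda>_. True)
    (\<lambda>j. if j = 0 then select_element {..<p} C else select_element {p..<q} C)
    (\<lambda>j. if j = 0 then 1 else -1) 0"
  have "0 < p" "p < q"
    using assms fs gs by (auto simp: p_def q_def ps_def)
  have "N x = max_affine F x - max_affine G x" if "x \<in> K" for x
  proof -
    have hidden: "(\<lambda>i. (\<Sum>j<m1. A1 i j * de_neuron UNIV (\<lambda>k. x $ k) True (S1 j)) + snd (ps ! i))
        = aff x"
      using layer1 bounded that by (simp add: aff_def)
    have "aff x ` A = (\<lambda>(w, c). w \<bullet> x + c) ` ((!) ps ` A)" for A
      by (simp add: aff_def image_image case_prod_beta)
    then have "aff x ` {..<p} = (\<lambda>(w, c). w \<bullet> x + c) ` F"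
        "aff x ` {p..<q} = (\<lambda>(w, c). w \<bullet> x + c) ` G"
      using nth_append_image_prefix[of fs gs] nth_append_image_suffix[of fs gs] fs gs
      by (simp_all add: ps_def p_def q_def)
    moreover have "N x = Max (aff x ` {..<p}) - Max (aff x ` {p..<q})"
      unfolding N_def morphnet2_def Let_def hidden
      using dilation_layer_max_difference[OF \<open>0 < p\<close> \<open>p < q\<close>, of "aff x" C] C that by simp
    ultimately show ?thesis
      by (simp add: max_affine_def)
  qed
  moreover have "is_dilation_morphnet2 N"
    unfolding is_dilation_morphnet2_def N_def by blast
  ultimately show ?thesis
    by blast
qed

section \<open>Universal approximation\<close>

lemma dilation_morphnet2_approx:
  fixes K :: "(real ^ 'd) set"
  assumes "compact K" "continuous_on K f" "e > 0"
  shows "\<exists>N. is_dilation_morphnet2 N \<and> (\<forall>x\<in>K. \<bar>f x - N x\<bar> < e)"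
proof -
  obtain R where R: "\<forall>x\<in>K. norm x \<le> R"
    using compact_imp_bounded[OF \<open>compact K\<close>] bounded_pos by blast
  have "\<exists>h\<in>max_affine_differences. \<forall>x\<in>K. \<bar>f x - h x\<bar> < e"
  proof (cases "K = {}")
    case True
    then show ?thesis
      using affine_in_max_affine_differences by blast
  next
    case False
    then show ?thesis
      by (intro lattice_Stone_Weierstrass[OF assms(1) False assms(2,3)])
        (auto intro: continuous_on_max_affine_differences max_affine_differences_max
          max_affine_differences_min max_affine_differences_interpolate)
  qed
  then obtain F G where FG: "finite F" "F \<noteq> {}" "finite G" "G \<noteq> {}"
    and approx: "\<forall>x\<in>K. \<bar>f x - (max_affine F x - max_affine G x)\<bar> < e"
    by (auto elim!: max_affine_differences_elim)
  obtain N where "is_dilation_morphnet2 N" and N: "\<forall>x\<in>K. N x = max_affine F x - max_affine G x"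
    using max_affine_difference_dilation_morphnet2[OF FG R] by blast
  moreover have "\<forall>x\<in>K. \<bar>f x - N x\<bar> < e"
    using approx N by simp
  ultimately show ?thesis
    by blast
qed

lemma is_dilation_morphnet2_imp_is_morphnet2: "is_dilation_morphnet2 N \<Longrightarrow> is_morphnet2 N"
  unfolding is_dilation_morphnet2_def is_morphnet2_def by blast

theorem mainTheorem4:
  fixes K :: "(real ^ 'd) set" and f :: "real ^ 'd \<Rightarrow> real" and \<epsilon> :: real
  assumes "compact K" and "continuous_on K f" and "\<epsilon> > 0"
  shows "\<exists>N. is_morphnet2 N \<and> is_dilation_morphnet2 N \<and>
           (SUP x\<in>K. ereal \<bar>f x - N x\<bar>) < ereal \<epsilon>"
proof -
  obtain N where N: "is_dilation_morphnet2 N" and approx: "\<forall>x\<in>K. \<bar>f x - N x\<bar> < \<epsilon> / 2"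
    using dilation_morphnet2_approx[OF assms(1,2), of "\<epsilon> / 2"] assms(3) by auto
  have "(SUP x\<in>K. ereal \<bar>f x - N x\<bar>) \<le> ereal (\<epsilon> / 2)"
    using approx by (intro SUP_least) (simp add: less_imp_le)
  also have "\<dots> < ereal \<epsilon>"
    using assms(3) by simp
  finally show ?thesis
    using N is_dilation_morphnet2_imp_is_morphnet2 by blast
qed

end
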